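(* Let $L$ be a finite lattice, $a\in L$, and $\varphi\in M_1(L)$. Then the function $x\mapsto\lambda(\varphi;a,x)$ belongs to $M_1(L)$.
   Context: $L$ is a finite lattice with join $\vee$ and meet $\wedge$. $M_1(L)$ is the set of nonnegative monotone (order-preserving) real functions on $L$. A path from $a$ to $b$ in $L$ is a sequence $H=(h_0,h_1,\dots,h_m)$ of distinct elements of $L$ with $h_0=a$, $h_m=b$ ($m\ge0$), viewed as a tree with edges $\{h_{i-1},h_i\}$; for it $\varphi(H)=\sum_{i=0}^m\varphi(h_i)-\sum_{i=1}^m\varphi(h_{i-1}\vee h_i)$. Define $\lambda(\varphi;a,b)=\max\{\varphi(H): H\text{ a path from }a\text{ to }b\}$. *)

theory Defs
  imports Complex_Main
begin

definition M1 :: "('a::lattice \<Rightarrow> real) set" where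
  "M1 = {\<phi>. mono \<phi> \<and> (\<forall>x. 0 \<le> \<phi> x)}"

definition lattice_paths :: "'a \<Rightarrow> 'a \<Rightarrow> 'a list set" where
  "lattice_paths a b = {H. H \<noteq> [] \<and> distinct H \<and> hd H = a \<and> last H = b}"

definition path_val :: "('a::lattice \<Rightarrow> real) \<Rightarrow> 'a list \<Rightarrow> real" where
  "path_val \<phi> H = (\<Sum>i<length H. \<phi> (H ! i))
                   - (\<Sum>i\<in>{1..<length H}. \<phi> (sup (H ! (i - 1)) (H ! i)))"

definition lam :: "('a::{lattice,finite} \<Rightarrow> real) \<Rightarrow> 'a \<Rightarrow> 'a \<Rightarrow> real" where
  "lam \<phi> a b = Max (path_val \<phi> ` lattice_paths a b)"

end

theory Submission
  imports Defs
begin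

text \<open>
  Appending a vertex y to a path ending in x changes its value by \<phi> y - \<phi> (x \<squnion> y), which is
  nonpositive for monotone \<phi> and zero when x \<le> y. So a best path to x can be extended to y \<ge> x
  without loss (or, if it already visits y, cut off there without loss): \<lambda>(\<phi>; a, -) is monotone.
  Nonnegativity then follows from \<lambda>(\<phi>; a, b) \<ge> \<lambda>(\<phi>; a, a \<sqinter> b) \<ge> \<phi>(a \<sqinter> b), the last bound
  coming from the path (a, a \<sqinter> b).
\<close>

lemma path_val_snoc:
  assumes "H \<noteq> []"
  shows "path_val \<phi> (H @ [u]) = path_val \<phi> H + \<phi> u - \<phi> (sup (last H) u)"
proof -
  define n where "n = length H"
  have "n \<ge> 1" using assms by (simp add: n_def Suc_leI)
  have vertices: "(\<Sum>i<length (H @ [u]). \<phi> ((H @ [u]) ! i)) = (\<Sum>i<n. \<phi> (H ! i)) + \<phi> u"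
    by (simp add: n_def nth_append)
  have "(\<Sum>i\<in>{1..<length (H @ [u])}. \<phi> (sup ((H @ [u]) ! (i - 1)) ((H @ [u]) ! i)))
      = (\<Sum>i\<in>{1..<n}. \<phi> (sup ((H @ [u]) ! (i - 1)) ((H @ [u]) ! i)))
        + \<phi> (sup ((H @ [u]) ! (n - 1)) ((H @ [u]) ! n))"
    using \<open>n \<ge> 1\<close> assms by (simp add: n_def sum.atLeastLessThan_Suc)
  also have "(\<Sum>i\<in>{1..<n}. \<phi> (sup ((H @ [u]) ! (i - 1)) ((H @ [u]) ! i)))
           = (\<Sum>i\<in>{1..<n}. \<phi> (sup (H ! (i - 1)) (H ! i)))"
    by (rule sum.cong) (auto simp: nth_append n_def)
  also have "(H @ [u]) ! (n - 1) = last H"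
    using assms \<open>n \<ge> 1\<close> by (simp add: nth_append n_def last_conv_nth)
  also have "(H @ [u]) ! n = u" by (simp add: n_def)
  finally show ?thesis using vertices unfolding path_val_def n_def by simp
qed

lemma path_val_append_le:
  assumes "P \<noteq> []" and "mono \<phi>"
  shows "path_val \<phi> (P @ Q) \<le> path_val \<phi> P"
proof (induction Q rule: rev_induct)
  case Nil
  then show ?case by simp
next
  case (snoc u Q)
  have "\<phi> u \<le> \<phi> (sup (last (P @ Q)) u)" using \<open>mono \<phi>\<close> by (simp add: monoD)
  then show ?case
    using snoc path_val_snoc[of "P @ Q" \<phi> u] \<open>P \<noteq> []\<close> by simp
qed

lemma finite_lattice_paths: "finite (lattice_paths (a::'a::finite) b)"
proof (rule finite_subset)
  show "lattice_paths a b \<subseteq> {xs. set xs \<subseteq> UNIV \<and> distinct xs}"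
    unfolding lattice_paths_def by auto
  show "finite {xs. set xs \<subseteq> (UNIV::'a set) \<and> distinct xs}"
    by (rule finite_subset_distinct) simp
qed

lemma lattice_paths_nonempty: "lattice_paths a b \<noteq> {}"
proof -
  have "(if a = b then [a] else [a, b]) \<in> lattice_paths a b"
    by (simp add: lattice_paths_def)
  then show ?thesis by blast
qed

lemma path_val_le_lam:
  fixes \<phi> :: "'a::{lattice,finite} \<Rightarrow> real"
  assumes "H \<in> lattice_paths a b"
  shows "path_val \<phi> H \<le> lam \<phi> a b"
  unfolding lam_def using assms finite_lattice_paths by (intro Max_ge) auto

lemma lam_attained:
  fixes \<phi> :: "'a::{lattice,finite} \<Rightarrow> real"
  obtains H where "H \<in> lattice_paths a b" and "path_val \<phi> H = lam \<phi> a b"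
proof -
  have "lam \<phi> a b \<in> path_val \<phi> ` lattice_paths a b"
    unfolding lam_def
    using lattice_paths_nonempty[of a b] finite_lattice_paths[of a b] by (intro Max_in) auto
  then show ?thesis using that by auto
qed

lemma lam_ge_below:
  fixes \<phi> :: "'a::{lattice,finite} \<Rightarrow> real"
  assumes "c \<le> a"
  shows "\<phi> c \<le> lam \<phi> a c"
proof (cases "c = a")
  case True
  have "[a] \<in> lattice_paths a a" by (simp add: lattice_paths_def)
  from path_val_le_lam[OF this, of \<phi>] True show ?thesis by (simp add: path_val_def)
next
  case False
  then have "[a, c] \<in> lattice_paths a c" by (simp add: lattice_paths_def)
  from path_val_le_lam[OF this, of \<phi>] assms show ?thesis
    by (simp add: path_val_def sup.absorb1)
qed

lemma lam_mono:
  fixes \<phi> :: "'a::{lattice,finite} \<Rightarrow> real"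
  assumes "mono \<phi>" and "x \<le> y"
  shows "lam \<phi> a x \<le> lam \<phi> a y"
proof -
  obtain H where H: "H \<in> lattice_paths a x" and H_opt: "path_val \<phi> H = lam \<phi> a x"
    by (rule lam_attained)
  have "H \<noteq> []" "distinct H" "hd H = a" "last H = x"
    using H by (auto simp: lattice_paths_def)
  obtain H' where "H' \<in> lattice_paths a y" and "path_val \<phi> H \<le> path_val \<phi> H'"
  proof (cases "y \<in> set H")
    case True
    then obtain P Q where H_split: "H = P @ y # Q" by (meson split_list)
    have "P @ [y] \<in> lattice_paths a y"
      using \<open>distinct H\<close> \<open>hd H = a\<close> H_split by (cases P) (auto simp: lattice_paths_def)
    moreover have "path_val \<phi> H \<le> path_val \<phi> (P @ [y])"
      using path_val_append_le[of "P @ [y]" \<phi> Q] \<open>mono \<phi>\<close> H_split by simp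
    ultimately show ?thesis by (rule that)
  next
    case False
    have "H @ [y] \<in> lattice_paths a y"
      using \<open>H \<noteq> []\<close> \<open>distinct H\<close> \<open>hd H = a\<close> False by (auto simp: lattice_paths_def)
    moreover have "path_val \<phi> (H @ [y]) = path_val \<phi> H"
      using path_val_snoc[OF \<open>H \<noteq> []\<close>, of \<phi> y] \<open>last H = x\<close> \<open>x \<le> y\<close>
      by (simp add: sup.absorb2)
    ultimately show ?thesis using that by simp
  qed
  then show ?thesis using H_opt path_val_le_lam[of H' a y \<phi>] by linarith
qed

theorem lemma3p10:
  fixes \<phi> :: "'a::{lattice,finite} \<Rightarrow> real" and a :: 'a
  assumes "\<phi> \<in> M1"
  shows "(\<lambda>x. lam \<phi> a x) \<in> M1"
proof -
  have "mono \<phi>" and nonneg: "\<And>x. 0 \<le> \<phi> x" using assms by (auto simp: M1_def)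
  have "0 \<le> lam \<phi> a b" for b
  proof -
    have "0 \<le> \<phi> (inf a b)" by (rule nonneg)
    also have "\<dots> \<le> lam \<phi> a (inf a b)" by (rule lam_ge_below) simp
    also have "\<dots> \<le> lam \<phi> a b" using \<open>mono \<phi>\<close> by (rule lam_mono) simp
    finally show ?thesis .
  qed
  moreover have "mono (lam \<phi> a)" using lam_mono[OF \<open>mono \<phi>\<close>] by (rule monoI)
  ultimately show ?thesis by (simp add: M1_def)
qed

end
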